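(* Let $M\ge 1$ and let $I:\mathbb{R}_+^M\to\mathbb{R}_{++}$ be a concave function. Then $I$ is a standard interference function, i.e. (1) for all $\mathbf{x}\in\mathbb{R}_+^M$ and all $\alpha>1$, $\alpha I(\mathbf{x})>I(\alpha\mathbf{x})$; and (2) for all $\mathbf{x}_1,\mathbf{x}_2\in\mathbb{R}_+^M$ with $\mathbf{x}_1\ge\mathbf{x}_2$ (componentwise), $I(\mathbf{x}_1)\ge I(\mathbf{x}_2)$.
   Context: $\mathbb{R}_+$ denotes the nonnegative reals and $\mathbb{R}_{++}$ the strictly positive reals; vector inequalities are componentwise. A function $I:\mathbb{R}_+^M\to\mathbb{R}_{++}$ is called a standard interference function if it satisfies scalability ($\alpha I(\mathbf{x})>I(\alpha\mathbf{x})$ for all $\mathbf{x}\in\mathbb{R}_+^M$, $\alpha>1$) and monotonicity ($I(\mathbf{x}_1)\ge I(\mathbf{x}_2)$ whenever $\mathbf{x}_1\ge\mathbf{x}_2$). *)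

theory Defs
  imports "HOL-Analysis.Analysis"
begin

end

theory Submission
  imports Defs
begin

(* Both properties are instances of general facts about
   concave functions on a set S, each proved by writing one point as a convex
   combination of two others:
   - Scalability: x is the combination (1 - 1/a) 0 + (1/a) (a x), so concavity gives
     a I(x) >= (a - 1) I(0) + I(a x), and I(0) > 0 makes the inequality strict.
   - Monotonicity: if the ray from x2 through x1 stays in S, then
     x1 = (1 - 1/T) x2 + (1/T) (x2 + T (x1 - x2)) for every T >= 1; a lower bound b of
     the function on S yields T (f x2 - f x1) <= f x2 - b for all T >= 1, which
     forces f x2 <= f x1.  For x1 >= x2 >= 0 the ray stays in the orthant, and the
     lower bound is 0 by positivity. *)

lemma concave_on_scaled_bound:
  fixes f :: "'a::real_vector \<Rightarrow> real"
  assumes conc: "concave_on S f" and "0 \<in> S" "a *\<^sub>R x \<in> S" and a: "a \<ge> 1"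
  shows "a * f x \<ge> (a - 1) * f 0 + f (a *\<^sub>R x)"
proof -
  have t: "0 \<le> 1 / a" "1 / a \<le> 1" using a by auto
  have "(1 - 1 / a) *\<^sub>R 0 + (1 / a) *\<^sub>R (a *\<^sub>R x) = x" using a by simp
  with concave_onD[OF conc t \<open>0 \<in> S\<close> \<open>a *\<^sub>R x \<in> S\<close>]
  have "f x \<ge> (1 - 1 / a) * f 0 + (1 / a) * f (a *\<^sub>R x)" by simp
  hence "a * f x \<ge> a * ((1 - 1 / a) * f 0 + (1 / a) * f (a *\<^sub>R x))"
    using a by (simp add: mult_left_mono)
  also have "a * ((1 - 1 / a) * f 0 + (1 / a) * f (a *\<^sub>R x)) = (a - 1) * f 0 + f (a *\<^sub>R x)"
    using a by (simp add: field_simps)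
  finally show ?thesis .
qed

lemma concave_on_scalable:
  fixes f :: "'a::real_vector \<Rightarrow> real"
  assumes "concave_on S f" "0 \<in> S" "a *\<^sub>R x \<in> S" "a > 1" "f 0 > 0"
  shows "f (a *\<^sub>R x) < a * f x"
proof -
  have "(a - 1) * f 0 > 0" using assms by simp
  with concave_on_scaled_bound[of S f a x] assms show ?thesis by linarith
qed

lemma concave_on_ray_bound:
  fixes f :: "'a::real_vector \<Rightarrow> real"
  assumes conc: "concave_on S f" and "x2 \<in> S" "x2 + T *\<^sub>R (x1 - x2) \<in> S"
    and T: "T \<ge> 1" and low: "b \<le> f (x2 + T *\<^sub>R (x1 - x2))"
  shows "T * (f x2 - f x1) \<le> f x2 - b"
proof -
  let ?y = "x2 + T *\<^sub>R (x1 - x2)"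
  have t: "0 \<le> 1 / T" "1 / T \<le> 1" using T by auto
  have "(1 - 1 / T) *\<^sub>R x2 + (1 / T) *\<^sub>R ?y = x1"
    using T by (simp add: algebra_simps)
  with concave_onD[OF conc t \<open>x2 \<in> S\<close> \<open>?y \<in> S\<close>]
  have "f x1 \<ge> (1 - 1 / T) * f x2 + (1 / T) * f ?y" by simp
  hence "T * f x1 \<ge> T * ((1 - 1 / T) * f x2 + (1 / T) * f ?y)"
    using T by (simp add: mult_left_mono)
  also have "T * ((1 - 1 / T) * f x2 + (1 / T) * f ?y) = T * f x2 - f x2 + f ?y"
    using T by (simp add: field_simps)
  finally show ?thesis using low by (simp add: algebra_simps)
qed

lemma concave_on_ray_mono:
  fixes f :: "'a::real_vector \<Rightarrow> real"
  assumes conc: "concave_on S f" and "x2 \<in> S"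
    and ray: "\<And>T. T \<ge> 1 \<Longrightarrow> x2 + T *\<^sub>R (x1 - x2) \<in> S"
    and low: "\<And>z. z \<in> S \<Longrightarrow> b \<le> f z"
  shows "f x2 \<le> f x1"
proof (rule ccontr)
  assume "\<not> f x2 \<le> f x1"
  hence d: "f x2 - f x1 > 0" by simp
  define T where "T = max 1 ((f x2 - b) / (f x2 - f x1) + 1)"
  have "T \<ge> 1" by (simp add: T_def)
  hence "T * (f x2 - f x1) \<le> f x2 - b"
    using concave_on_ray_bound[OF conc \<open>x2 \<in> S\<close> ray] low ray by blast
  moreover have "T * (f x2 - f x1) > f x2 - b"
  proof -
    have "T > (f x2 - b) / (f x2 - f x1)" by (simp add: T_def)
    thus ?thesis using d by (simp add: field_simps)
  qed
  ultimately show False by simp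
qed

lemma orthant_ray:
  fixes x1 x2 :: "real ^ 'm"
  assumes "\<forall>i. 0 \<le> x2 $ i" "\<forall>i. x2 $ i \<le> x1 $ i" "T \<ge> 0"
  shows "x2 + T *\<^sub>R (x1 - x2) \<in> {x. \<forall>i. 0 \<le> x $ i}"
  using assms by simp

theorem proposition1:
  fixes I :: "real ^ 'm \<Rightarrow> real"
  assumes conc: "concave_on {x. \<forall>i. 0 \<le> x $ i} I"
    and pos: "\<And>x. (\<forall>i. 0 \<le> x $ i) \<Longrightarrow> I x > 0"
  shows "(\<forall>x \<alpha>. (\<forall>i. 0 \<le> x $ i) \<and> \<alpha> > 1 \<longrightarrow> \<alpha> * I x > I (\<alpha> *\<^sub>R x))
       \<and> (\<forall>x1 x2. (\<forall>i. 0 \<le> x1 $ i) \<and> (\<forall>i. 0 \<le> x2 $ i) \<and> (\<forall>i. x2 $ i \<le> x1 $ i)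
              \<longrightarrow> I x1 \<ge> I x2)"
proof (intro conjI allI impI)
  fix x :: "real ^ 'm" and \<alpha> :: real
  assume h: "(\<forall>i. 0 \<le> x $ i) \<and> \<alpha> > 1"
  hence "\<alpha> *\<^sub>R x \<in> {x. \<forall>i. 0 \<le> x $ i}" by simp
  with concave_on_scalable[OF conc] h pos[of 0]
  show "\<alpha> * I x > I (\<alpha> *\<^sub>R x)" by simp
next
  fix x1 x2 :: "real ^ 'm"
  assume h: "(\<forall>i. 0 \<le> x1 $ i) \<and> (\<forall>i. 0 \<le> x2 $ i) \<and> (\<forall>i. x2 $ i \<le> x1 $ i)"
  have ray: "\<And>T. T \<ge> 1 \<Longrightarrow> x2 + T *\<^sub>R (x1 - x2) \<in> {x. \<forall>i. 0 \<le> x $ i}"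
    using orthant_ray h by simp
  have nonneg: "\<And>z. z \<in> {x. \<forall>i. 0 \<le> x $ i} \<Longrightarrow> 0 \<le> I z"
    using pos by (simp add: less_imp_le)
  from h have "x2 \<in> {x. \<forall>i. 0 \<le> x $ i}" by simp
  from concave_on_ray_mono[OF conc this ray nonneg]
  show "I x1 \<ge> I x2" .
qed

end
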